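(* Let $G$ be a loopless multigraph, let $k \geq 1$, and let $M$ be a maximal $k$-edge-colorable subgraph of $G$ (maximal with respect to inclusion of edge sets). For every $v \in V(G)$ with $d_M(v) < k$, \[ d^{F}(v) \leq d_M(v) - \sum_{w \in U_k(v)}\bigl(k - d_M(w) - \mu_G(v,w)\bigr). \]
   Context: For vertices $v,w$ of a multigraph $G$, $\mu_G(v,w)$ is the number of edges joining $v$ and $w$; for a subgraph $M$, $\mu_M(v,w)$ is the number of $M$-edges joining them and $d_M(v)$ is the number of $M$-edges incident to $v$. $N(v)=N_G(v)$ is the set of neighbors of $v$ in $G$. A proper $k$-edge-coloring assigns colors from $\{1,\dots,k\}$ so that distinct edges sharing an endpoint get distinct colors. For each $v\in V(G)$ define $F_k(v) = \{w \in N(v) : d_M(w) \leq k - \mu_G(v,w)\}$, $U_k(v) = \{w \in F_k(v) : \mu_M(v,w) < \mu_G(v,w)\}$, and $d^{F}(v) = \sum_{w\in F_k(v)} \mu_G(v,w)$. *)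

theory Defs
  imports Main
begin

text \<open>A multigraph is given by a vertex set V, an edge set E (edge identifiers)
and an endpoint map ends; it is loopless if every edge has exactly two
distinct endpoints in V. Subgraphs are given by their edge sets M \<subseteq> E.\<close>

definition loopless_multigraph :: "'v set \<Rightarrow> 'e set \<Rightarrow> ('e \<Rightarrow> 'v set) \<Rightarrow> bool" where
  "loopless_multigraph V E ends \<longleftrightarrow> finite V \<and> finite E \<and>
     (\<forall>e\<in>E. ends e \<subseteq> V \<and> card (ends e) = 2)"

definition mult :: "'e set \<Rightarrow> ('e \<Rightarrow> 'v set) \<Rightarrow> 'v \<Rightarrow> 'v \<Rightarrow> nat" where
  "mult A ends v w = card {e\<in>A. ends e = {v, w}}"

definition deg :: "'e set \<Rightarrow> ('e \<Rightarrow> 'v set) \<Rightarrow> 'v \<Rightarrow> nat" where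
  "deg A ends v = card {e\<in>A. v \<in> ends e}"

definition nbrs :: "'v set \<Rightarrow> 'e set \<Rightarrow> ('e \<Rightarrow> 'v set) \<Rightarrow> 'v \<Rightarrow> 'v set" where
  "nbrs V E ends v = {w\<in>V. w \<noteq> v \<and> mult E ends v w > 0}"

definition proper_edge_coloring :: "'e set \<Rightarrow> ('e \<Rightarrow> 'v set) \<Rightarrow> nat \<Rightarrow> ('e \<Rightarrow> nat) \<Rightarrow> bool" where
  "proper_edge_coloring A ends k c \<longleftrightarrow>
     (\<forall>e\<in>A. c e \<in> {1..k}) \<and>
     (\<forall>e\<in>A. \<forall>e'\<in>A. e \<noteq> e' \<and> ends e \<inter> ends e' \<noteq> {} \<longrightarrow> c e \<noteq> c e')"

definition k_edge_colorable :: "'e set \<Rightarrow> ('e \<Rightarrow> 'v set) \<Rightarrow> nat \<Rightarrow> bool" where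
  "k_edge_colorable A ends k \<longleftrightarrow> (\<exists>c. proper_edge_coloring A ends k c)"

definition maximal_k_colorable :: "'e set \<Rightarrow> ('e \<Rightarrow> 'v set) \<Rightarrow> nat \<Rightarrow> 'e set \<Rightarrow> bool" where
  "maximal_k_colorable E ends k M \<longleftrightarrow> M \<subseteq> E \<and> k_edge_colorable M ends k \<and>
     (\<forall>M'. M \<subset> M' \<and> M' \<subseteq> E \<longrightarrow> \<not> k_edge_colorable M' ends k)"

definition Fk :: "'v set \<Rightarrow> 'e set \<Rightarrow> ('e \<Rightarrow> 'v set) \<Rightarrow> 'e set \<Rightarrow> nat \<Rightarrow> 'v \<Rightarrow> 'v set" where
  "Fk V E ends M k v = {w\<in>nbrs V E ends v.
       int (deg M ends w) \<le> int k - int (mult E ends v w)}"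

definition Uk :: "'v set \<Rightarrow> 'e set \<Rightarrow> ('e \<Rightarrow> 'v set) \<Rightarrow> 'e set \<Rightarrow> nat \<Rightarrow> 'v \<Rightarrow> 'v set" where
  "Uk V E ends M k v = {w\<in>Fk V E ends M k v. mult M ends v w < mult E ends v w}"

definition dF :: "'v set \<Rightarrow> 'e set \<Rightarrow> ('e \<Rightarrow> 'v set) \<Rightarrow> 'e set \<Rightarrow> nat \<Rightarrow> 'v \<Rightarrow> nat" where
  "dF V E ends M k v = (\<Sum>w\<in>Fk V E ends M k v. mult E ends v w)"

end

theory Submission
  imports Defs "HOL-Library.Disjoint_Sets" "HOL-Combinatorics.Transposition"
begin

text \<open>Fix a proper k-colouring \<phi> of M and a colour \<beta> missing at v. Starting from the
  uncoloured edges at v, take a longest Vizing fan at v. By maximality it is closed: every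
  coloured edge at v whose colour is missing at a fan vertex is a fan edge. Since M cannot be
  extended, it is elementary: the sets of colours missing at v and at the fan vertices are
  pairwise disjoint (fan shifts and Kempe swaps). Hence the colours missing at the fan vertices
  Y sit on distinct edges at v that lead into Y, so
  d_M(v) \<ge> \<Sum>_{y\<in>Y} (k - d_M(y)) + \<Sum>_{w\<in>F_k(v)-Y} \<mu>_M(v,w).
  Since U_k(v) \<subseteq> Y, \<mu>_G(v,w) \<le> k - d_M(w) on F_k(v) and \<mu>_M = \<mu>_G off U_k(v), this
  bound dominates d^F(v) + \<Sum>_{w\<in>U_k(v)} (k - d_M(w) - \<mu>_G(v,w)) term by term.\<close>

locale multigraph_k_colouring =
  fixes V :: "'v set" and E :: "'e set" and ends :: "'e \<Rightarrow> 'v set" and k :: nat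
  assumes loopless: "loopless_multigraph V E ends"
begin

lemma finite_V: "finite V" and finite_E: "finite E"
  and ends_subset_V: "e \<in> E \<Longrightarrow> ends e \<subseteq> V" and card_ends: "e \<in> E \<Longrightarrow> card (ends e) = 2"
  using loopless unfolding loopless_multigraph_def by auto

lemma ends_eq_doubleton:
  assumes "e \<in> E" "x \<in> ends e"
  obtains y where "y \<noteq> x" "ends e = {x, y}"
  using card_ends[OF assms(1)] assms(2) by (metis card_2_iff insert_commute insertE singletonD)

abbreviation proper :: "'e set \<Rightarrow> ('e \<Rightarrow> nat) \<Rightarrow> bool" where
  "proper A \<phi> \<equiv> proper_edge_coloring A ends k \<phi>"

lemma proper_colour_range: "proper A \<phi> \<Longrightarrow> e \<in> A \<Longrightarrow> \<phi> e \<in> {1..k}"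
  unfolding proper_edge_coloring_def by blast

lemma proper_adjacent_distinct:
  "proper A \<phi> \<Longrightarrow> e \<in> A \<Longrightarrow> e' \<in> A \<Longrightarrow> e \<noteq> e' \<Longrightarrow> x \<in> ends e \<Longrightarrow> x \<in> ends e' \<Longrightarrow> \<phi> e \<noteq> \<phi> e'"
  unfolding proper_edge_coloring_def by blast

definition missing :: "'e set \<Rightarrow> ('e \<Rightarrow> nat) \<Rightarrow> 'v \<Rightarrow> nat set" where
  "missing A \<phi> x = {c\<in>{1..k}. \<forall>e\<in>A. x \<in> ends e \<longrightarrow> \<phi> e \<noteq> c}"

lemma finite_missing: "finite (missing A \<phi> x)"
  unfolding missing_def by simp

lemma missing_eq_unused: "missing A \<phi> x = {1..k} - \<phi> ` {e\<in>A. x \<in> ends e}"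
  unfolding missing_def by auto

lemma
  assumes "proper A \<phi>" "finite A"
  shows deg_le_k: "deg A ends x \<le> k"
    and card_missing: "card (missing A \<phi> x) = k - deg A ends x"
proof -
  let ?D = "{e\<in>A. x \<in> ends e}"
  have used: "\<phi> ` ?D \<subseteq> {1..k}" using proper_colour_range[OF assms(1)] by auto
  have "inj_on \<phi> ?D" using proper_adjacent_distinct[OF assms(1)] by (auto intro: inj_onI)
  then have card_used: "card (\<phi> ` ?D) = deg A ends x"
    unfolding deg_def by (simp add: card_image)
  show "deg A ends x \<le> k" using card_mono[OF _ used] card_used by simp
  show "card (missing A \<phi> x) = k - deg A ends x"
    unfolding missing_eq_unused using card_Diff_subset[OF _ used] assms(2) card_used by simp
qed

definition extendable :: "'e set \<Rightarrow> bool" where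
  "extendable A \<longleftrightarrow> (\<exists>e\<in>E - A. k_edge_colorable (insert e A) ends k)"

lemma maximal_not_extendable: "maximal_k_colorable E ends k M \<Longrightarrow> \<not> extendable M"
  unfolding maximal_k_colorable_def extendable_def by blast

lemma proper_colour_edge:
  assumes "proper A \<phi>" "ends e = {x, y}" "\<alpha> \<in> missing A \<phi> x" "\<alpha> \<in> missing A \<phi> y"
  shows "proper (insert e A) (\<phi>(e := \<alpha>))"
  using assms unfolding proper_edge_coloring_def missing_def by auto

lemma extendable_colour_edge:
  assumes "e \<in> E - A" "proper A \<phi>" "ends e = {x, y}" "\<alpha> \<in> missing A \<phi> x" "\<alpha> \<in> missing A \<phi> y"
  shows "extendable A"
  using proper_colour_edge[OF assms(2-5)] assms(1) unfolding extendable_def k_edge_colorable_def by blast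

lemma missing_fun_upd: "c \<in> missing A \<phi> x \<Longrightarrow> c \<noteq> \<alpha> \<Longrightarrow> c \<in> missing A (\<phi>(e := \<alpha>)) x"
  unfolding missing_def by auto

definition fan :: "'e set \<Rightarrow> ('e \<Rightarrow> nat) \<Rightarrow> 'v \<Rightarrow> ('e \<times> 'v) list \<Rightarrow> bool" where
  "fan A \<phi> v fs \<longleftrightarrow> distinct (map fst fs) \<and>
     (\<forall>i<length fs. fst (fs!i) \<in> E \<and> ends (fst (fs!i)) = {v, snd (fs!i)} \<and> snd (fs!i) \<noteq> v \<and>
        (fst (fs!i) \<in> A \<longrightarrow> (\<exists>l<i. \<phi> (fst (fs!i)) \<in> missing A \<phi> (snd (fs!l)))))"

lemma fan_nth:
  assumes "fan A \<phi> v fs" "i < length fs"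
  shows "fst (fs!i) \<in> E" "ends (fst (fs!i)) = {v, snd (fs!i)}" "snd (fs!i) \<noteq> v"
    "fst (fs!i) \<in> A \<Longrightarrow> \<exists>l<i. \<phi> (fst (fs!i)) \<in> missing A \<phi> (snd (fs!l))"
  using assms unfolding fan_def by auto

lemma fan_memD:
  assumes "fan A \<phi> v fs" "(e, y) \<in> set fs"
  shows "e \<in> E" "ends e = {v, y}" "y \<noteq> v"
  using assms fan_nth[OF assms(1)] by (metis fst_conv in_set_conv_nth snd_conv)+

lemma fan_take: "fan A \<phi> v fs \<Longrightarrow> fan A \<phi> v (take n fs)"
  unfolding fan_def by (auto simp: take_map[symmetric] distinct_take) (metis nth_take order.strict_trans)

lemma fan_snoc_iff:
  "fan A \<phi> v (fs @ [(e, y)]) \<longleftrightarrow> fan A \<phi> v fs \<and> e \<notin> fst ` set fs \<and> e \<in> E \<and> ends e = {v, y} \<and> y \<noteq> v \<and>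
     (e \<in> A \<longrightarrow> (\<exists>l<length fs. \<phi> e \<in> missing A \<phi> (snd (fs!l))))"
  unfolding fan_def by (auto simp: nth_append less_Suc_eq) (metis order.strict_trans)+

lemma fan_recolour:
  assumes "fan A \<phi> v fs"
    and "\<And>i. i < length fs \<Longrightarrow> fst (fs!i) \<in> A \<Longrightarrow> \<psi> (fst (fs!i)) = \<phi> (fst (fs!i))"
    and "\<And>i l. l < i \<Longrightarrow> i < length fs \<Longrightarrow> fst (fs!i) \<in> A \<Longrightarrow>
           \<phi> (fst (fs!i)) \<in> missing A \<phi> (snd (fs!l)) \<Longrightarrow> \<phi> (fst (fs!i)) \<in> missing A \<psi> (snd (fs!l))"
  shows "fan A \<psi> v fs"
  using assms unfolding fan_def by metis

lemma fan_fun_upd: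
  assumes "fan A \<phi> v fs" "e \<notin> fst ` set fs" "\<alpha> \<in> missing A \<phi> v"
  shows "fan A (\<phi>(e := \<alpha>)) v fs"
proof (rule fan_recolour[OF assms(1)])
  fix i assume i: "i < length fs"
  then have "fst (fs!i) \<noteq> e" using assms(2) by (metis image_eqI nth_mem)
  then show "(\<phi>(e := \<alpha>)) (fst (fs!i)) = \<phi> (fst (fs!i))" by simp
  assume "fst (fs!i) \<in> A"
  then have "\<phi> (fst (fs!i)) \<noteq> \<alpha>" using assms(3) fan_nth(2)[OF assms(1) i] by (auto simp: missing_def)
  then show "\<phi> (fst (fs!i)) \<in> missing A (\<phi>(e := \<alpha>)) (snd (fs!l))"
    if "\<phi> (fst (fs!i)) \<in> missing A \<phi> (snd (fs!l))" for l
    using that missing_fun_upd by blast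
qed

text \<open>Shifting the colours of the fan down to a colour missing at both v and the last
  fan vertex frees a colour for an uncoloured fan edge.\<close>

lemma fan_shift_extendable:
  assumes "proper A \<phi>" "fan A \<phi> v fs" "fs \<noteq> []"
    "\<alpha> \<in> missing A \<phi> v" "\<alpha> \<in> missing A \<phi> (snd (last fs))"
  shows "extendable A"
  using assms
proof (induction "length fs" arbitrary: fs \<phi> \<alpha> rule: less_induct)
  case less
  obtain gs e y where fs: "fs = gs @ [(e, y)]"
    using less.prems(3) by (metis rev_exhaust surj_pair)
  with less.prems(2) have gs: "fan A \<phi> v gs" "e \<notin> fst ` set gs" and e: "e \<in> E" "ends e = {v, y}"
    and e_coloured: "e \<in> A \<Longrightarrow> \<exists>l<length gs. \<phi> e \<in> missing A \<phi> (snd (gs!l))"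
    by (simp_all add: fan_snoc_iff)
  have \<alpha>_y: "\<alpha> \<in> missing A \<phi> y" using less.prems(5) fs by simp
  show ?case
  proof (cases "e \<in> A")
    case False
    then show ?thesis using extendable_colour_edge[OF _ less.prems(1) e(2) less.prems(4) \<alpha>_y] e(1) by blast
  next
    case True
    then obtain l where l: "l < length gs" "\<phi> e \<in> missing A \<phi> (snd (gs!l))" using e_coloured by blast
    let ?\<psi> = "\<phi>(e := \<alpha>)" and ?hs = "take (Suc l) gs"
    have "\<phi> e \<noteq> \<alpha>" using less.prems(4) True e(2) by (auto simp: missing_def)
    have "proper A ?\<psi>"
      using proper_colour_edge[OF less.prems(1) e(2) less.prems(4) \<alpha>_y] True by (simp add: insert_absorb)
    moreover have "fan A ?\<psi> v ?hs"
      using gs(2) by (intro fan_fun_upd[OF fan_take[OF gs(1)] _ less.prems(4)]) (auto dest: in_set_takeD)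
    moreover have "\<phi> e \<in> missing A ?\<psi> v"
      using proper_colour_range[OF less.prems(1) True] proper_adjacent_distinct[OF less.prems(1) _ True, of _ v]
        e(2) \<open>\<phi> e \<noteq> \<alpha>\<close> by (auto simp: missing_def)
    moreover have "\<phi> e \<in> missing A ?\<psi> (snd (last ?hs))"
      using missing_fun_upd[OF l(2) \<open>\<phi> e \<noteq> \<alpha>\<close>] l(1) by (simp add: take_Suc_conv_app_nth)
    moreover have "length ?hs < length fs" "?hs \<noteq> []" using fs l(1) by auto
    ultimately show ?thesis using less.hyps by blast
  qed
qed

definition kempe_edges :: "'e set \<Rightarrow> ('e \<Rightarrow> nat) \<Rightarrow> nat \<Rightarrow> nat \<Rightarrow> 'e set" where
  "kempe_edges A \<phi> \<alpha> \<beta> = {e\<in>A. \<phi> e = \<alpha> \<or> \<phi> e = \<beta>}"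

definition linked :: "'e set \<Rightarrow> ('v \<times> 'v) set" where
  "linked H = {(a, b). \<exists>e\<in>H. ends e = {a, b}}"

definition component :: "'e set \<Rightarrow> 'v \<Rightarrow> 'v set" where
  "component H x = {z. (x, z) \<in> (linked H)\<^sup>*}"

lemma component_refl: "x \<in> component H x"
  unfolding component_def by simp

lemma component_sym:
  assumes "z \<in> component H x"
  shows "x \<in> component H z"
proof -
  have "sym (linked H)" unfolding linked_def sym_def by (auto simp: insert_commute)
  then show ?thesis using assms sym_rtrancl unfolding component_def sym_def by blast
qed

lemma component_trans: "z \<in> component H y \<Longrightarrow> y \<in> component H x \<Longrightarrow> z \<in> component H x"
  unfolding component_def by simp

lemma component_closed:
  assumes "H \<subseteq> E" "e \<in> H" "ends e \<inter> component H x \<noteq> {}"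
  shows "ends e \<subseteq> component H x"
proof -
  obtain a b where ab: "a \<in> component H x" "ends e = {a, b}"
    using assms(1-3) ends_eq_doubleton by (metis disjoint_iff subsetD)
  then have "(a, b) \<in> linked H" using assms(2) unfolding linked_def by blast
  then show ?thesis using ab unfolding component_def by auto
qed

lemma component_subset: "H \<subseteq> E \<Longrightarrow> component H x \<subseteq> insert x V"
proof
  fix z assume H: "H \<subseteq> E" and "z \<in> component H x"
  then have "(x, z) \<in> (linked H)\<^sup>*" unfolding component_def by simp
  then show "z \<in> insert x V"
    by induction (use H ends_subset_V in \<open>auto simp: linked_def\<close>)
qed

lemma finite_component: "H \<subseteq> E \<Longrightarrow> finite (component H x)"
  using component_subset finite_V by (meson finite_insert finite_subset)

lemma component_exit_edge:
  assumes "x \<in> S" "u \<in> component H x" "u \<notin> S"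
  obtains w u' e where "w \<in> S" "u' \<in> component H x - S" "e \<in> H" "ends e = {w, u'}"
proof -
  have "(x, u) \<in> (linked H)\<^sup>*" using assms(2) by (simp add: component_def)
  then have "u \<in> S \<or> (\<exists>w u' e. w \<in> S \<and> u' \<in> component H x - S \<and> e \<in> H \<and> ends e = {w, u'})"
  proof induction
    case base
    then show ?case using assms(1) by simp
  next
    case (step y z)
    then obtain e where "e \<in> H" "ends e = {y, z}" by (auto simp: linked_def)
    moreover have "z \<in> component H x" using step(1,2) by (auto simp: component_def)
    ultimately show ?case using step(3) by blast
  qed
  then show ?thesis using assms(3) that by blast
qed

lemma card_component_le:
  assumes "H \<subseteq> E"
  shows "card (component H x) \<le> card {e\<in>H. ends e \<subseteq> component H x} + 1"
proof -
  let ?C = "component H x"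
  let ?inner = "\<lambda>S. card {e\<in>H. ends e \<subseteq> S}"
  have finite_inner: "finite {e\<in>H. ends e \<subseteq> S}" for S
    using assms finite_E by (auto intro: finite_subset)
  have "card ?C + ?inner S \<le> card S + ?inner ?C" if "x \<in> S" "S \<subseteq> ?C" for S
    using that
  proof (induction "card (?C - S)" arbitrary: S)
    case 0
    then have "?C - S = {}" using finite_component[OF assms] by simp
    with 0 have "S = ?C" by blast
    then show ?case by simp
  next
    case (Suc n)
    then have "?C - S \<noteq> {}" by (metis card.empty nat.distinct(1))
    then obtain u where "u \<in> ?C - S" by blast
    then obtain w u' e where e: "w \<in> S" "u' \<in> ?C - S" "e \<in> H" "ends e = {w, u'}"
      using component_exit_edge[OF Suc.prems(1)] by blast
    have "finite S" using Suc.prems(2) finite_component[OF assms] finite_subset by blast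
    then have card_S': "card (insert u' S) = card S + 1" using e(2) by simp
    have "?C - insert u' S = (?C - S) - {u'}" by blast
    then have "card (?C - insert u' S) = n"
      using Suc.hyps(2) e(2) finite_component[OF assms] by (simp add: card_Diff_singleton)
    then have IH: "card ?C + ?inner (insert u' S) \<le> card (insert u' S) + ?inner ?C"
      using Suc.hyps(1) Suc.prems e(2) by blast
    have "e \<notin> {e\<in>H. ends e \<subseteq> S}" using e by auto
    then have "?inner S + 1 = card (insert e {e\<in>H. ends e \<subseteq> S})" using finite_inner by simp
    also have "\<dots> \<le> ?inner (insert u' S)" by (rule card_mono[OF finite_inner]) (use e in auto)
    finally have "?inner S + 1 \<le> ?inner (insert u' S)" .
    then show ?case using IH card_S' by linarith
  qed
  from this[of "{x}"] show ?thesis using component_refl[of x H] by simp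
qed

lemma card_colour_class_le:
  assumes "proper A \<phi>" "A \<subseteq> E" "S \<subseteq> A" "\<And>e. e \<in> S \<Longrightarrow> \<phi> e = \<gamma>"
    "\<Union> (ends ` S) \<subseteq> T" "finite T"
  shows "2 * card S \<le> card T"
proof -
  have S: "finite S" "\<And>e. e \<in> S \<Longrightarrow> e \<in> E" using assms(2,3) finite_subset[OF _ finite_E] by auto
  have "\<forall>e\<in>S. \<forall>e'\<in>S. e \<noteq> e' \<longrightarrow> ends e \<inter> ends e' = {}"
    using proper_adjacent_distinct[OF assms(1)] assms(3,4) by blast
  then have "card (\<Union> (ends ` S)) = (\<Sum>e\<in>S. card (ends e))"
    using S finite_subset[OF ends_subset_V finite_V] by (intro card_UN_disjoint) auto
  also have "\<dots> = 2 * card S" using S card_ends by simp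
  finally show ?thesis using card_mono[OF assms(6,5)] by simp
qed

text \<open>An (\<alpha>,\<beta>)-Kempe component is a path or a cycle, hence has at most two ends. Instead of
  proving that, count: its \<alpha>-edges avoid b and c, its \<beta>-edges avoid a, and being connected it
  has at least as many edges as vertices minus one.\<close>

lemma kempe_component_no_three_ends:
  assumes "A \<subseteq> E" "proper A \<phi>" "\<alpha> \<noteq> \<beta>" "a \<noteq> b" "a \<noteq> c" "b \<noteq> c"
    and "\<beta> \<in> missing A \<phi> a" "\<alpha> \<in> missing A \<phi> b" "\<alpha> \<in> missing A \<phi> c"
    and "b \<in> component (kempe_edges A \<phi> \<alpha> \<beta>) a" "c \<in> component (kempe_edges A \<phi> \<alpha> \<beta>) a"
  shows False
proof -
  let ?H = "kempe_edges A \<phi> \<alpha> \<beta>"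
  let ?C = "component ?H a"
  let ?E\<alpha> = "{e\<in>?H. ends e \<subseteq> ?C \<and> \<phi> e = \<alpha>}"
  let ?E\<beta> = "{e\<in>?H. ends e \<subseteq> ?C \<and> \<phi> e = \<beta>}"
  have H: "?H \<subseteq> A" "?H \<subseteq> E" using assms(1) by (auto simp: kempe_edges_def)
  have C: "finite ?C" "{a, b, c} \<subseteq> ?C" using finite_component[OF H(2)] component_refl assms(10,11) by auto
  have "{e\<in>?H. ends e \<subseteq> ?C} = ?E\<alpha> \<union> ?E\<beta>" "?E\<alpha> \<inter> ?E\<beta> = {}"
    using assms(3) by (auto simp: kempe_edges_def)
  then have "card ?C \<le> card ?E\<alpha> + card ?E\<beta> + 1"
    using card_component_le[OF H(2), of a] finite_subset[OF H(2) finite_E]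
    by (simp add: card_Un_disjoint)
  moreover have "2 * card ?E\<alpha> \<le> card (?C - {b, c})"
    using assms(8,9) H C(1) by (intro card_colour_class_le[OF assms(2,1)]) (auto simp: missing_def)
  moreover have "2 * card ?E\<beta> \<le> card (?C - {a})"
    using assms(7) H C(1) by (intro card_colour_class_le[OF assms(2,1)]) (auto simp: missing_def)
  moreover have "card (?C - {b, c}) = card ?C - 2" "card (?C - {a}) = card ?C - 1" "card ?C \<ge> 3"
    using C assms(4-6) card_mono[OF C(1) C(2)] by (auto simp: card_Diff_subset)
  ultimately show False by linarith
qed

definition kempe_closed :: "'e set \<Rightarrow> ('e \<Rightarrow> nat) \<Rightarrow> nat \<Rightarrow> nat \<Rightarrow> 'v set \<Rightarrow> bool" where
  "kempe_closed A \<phi> \<alpha> \<beta> C \<longleftrightarrow> (\<forall>e\<in>kempe_edges A \<phi> \<alpha> \<beta>. ends e \<inter> C \<noteq> {} \<longrightarrow> ends e \<subseteq> C)"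

lemma kempe_closed_component:
  assumes "A \<subseteq> E"
  shows "kempe_closed A \<phi> \<alpha> \<beta> (component (kempe_edges A \<phi> \<alpha> \<beta>) x)"
  unfolding kempe_closed_def
proof (intro ballI impI)
  have "kempe_edges A \<phi> \<alpha> \<beta> \<subseteq> E" using assms by (auto simp: kempe_edges_def)
  then show "ends e \<subseteq> component (kempe_edges A \<phi> \<alpha> \<beta>) x"
    if "e \<in> kempe_edges A \<phi> \<alpha> \<beta>" "ends e \<inter> component (kempe_edges A \<phi> \<alpha> \<beta>) x \<noteq> {}" for e
    using component_closed that by blast
qed

definition kempe_swap :: "nat \<Rightarrow> nat \<Rightarrow> 'v set \<Rightarrow> ('e \<Rightarrow> nat) \<Rightarrow> 'e \<Rightarrow> nat" where
  "kempe_swap \<alpha> \<beta> C \<phi> e = (if ends e \<subseteq> C then transpose \<alpha> \<beta> (\<phi> e) else \<phi> e)"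

lemma kempe_swap_inside:
  assumes "kempe_closed A \<phi> \<alpha> \<beta> C" "e \<in> A" "x \<in> ends e" "x \<in> C"
  shows "kempe_swap \<alpha> \<beta> C \<phi> e = transpose \<alpha> \<beta> (\<phi> e)"
proof (cases "ends e \<subseteq> C")
  case False
  then have "\<phi> e \<noteq> \<alpha>" "\<phi> e \<noteq> \<beta>" using assms unfolding kempe_closed_def kempe_edges_def by auto
  with False show ?thesis by (simp add: kempe_swap_def)
qed (simp add: kempe_swap_def)

lemma kempe_swap_outside: "x \<in> ends e \<Longrightarrow> x \<notin> C \<Longrightarrow> kempe_swap \<alpha> \<beta> C \<phi> e = \<phi> e"
  unfolding kempe_swap_def by auto

lemma transpose_colour_range: "\<alpha> \<in> {1..k} \<Longrightarrow> \<beta> \<in> {1..k} \<Longrightarrow> transpose \<alpha> \<beta> c \<in> {1..k} \<longleftrightarrow> c \<in> {1..k}"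
  by (auto simp: transpose_def)

lemma proper_kempe_swap:
  assumes "proper A \<phi>" "kempe_closed A \<phi> \<alpha> \<beta> C" "\<alpha> \<in> {1..k}" "\<beta> \<in> {1..k}"
  shows "proper A (kempe_swap \<alpha> \<beta> C \<phi>)"
  unfolding proper_edge_coloring_def
proof (intro conjI ballI impI)
  fix e assume "e \<in> A"
  then show "kempe_swap \<alpha> \<beta> C \<phi> e \<in> {1..k}"
    using proper_colour_range[OF assms(1)] transpose_colour_range[OF assms(3,4)] by (simp add: kempe_swap_def)
next
  fix e e' assume e: "e \<in> A" "e' \<in> A" and "e \<noteq> e' \<and> ends e \<inter> ends e' \<noteq> {}"
  then obtain y where y: "y \<in> ends e" "y \<in> ends e'" and "\<phi> e \<noteq> \<phi> e'"
    using proper_adjacent_distinct[OF assms(1)] by blast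
  then show "kempe_swap \<alpha> \<beta> C \<phi> e \<noteq> kempe_swap \<alpha> \<beta> C \<phi> e'"
    using kempe_swap_inside[OF assms(2)] kempe_swap_outside e
    by (cases "y \<in> C") (auto dest: transpose_eq_imp_eq)
qed

lemma missing_kempe_swap_outside: "x \<notin> C \<Longrightarrow> missing A (kempe_swap \<alpha> \<beta> C \<phi>) x = missing A \<phi> x"
  unfolding missing_def using kempe_swap_outside by auto

lemma missing_kempe_swap_inside:
  assumes "kempe_closed A \<phi> \<alpha> \<beta> C" "x \<in> C" "\<alpha> \<in> {1..k}" "\<beta> \<in> {1..k}"
  shows "missing A (kempe_swap \<alpha> \<beta> C \<phi>) x = transpose \<alpha> \<beta> ` missing A \<phi> x"
proof -
  have transpose_eq: "transpose \<alpha> \<beta> u = c \<longleftrightarrow> u = transpose \<alpha> \<beta> c" for u c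
    by auto
  have "c \<in> missing A (kempe_swap \<alpha> \<beta> C \<phi>) x \<longleftrightarrow> transpose \<alpha> \<beta> c \<in> missing A \<phi> x" for c
    using kempe_swap_inside[OF assms(1) _ _ assms(2)] transpose_colour_range[OF assms(3,4)]
    unfolding missing_def by (auto simp: transpose_eq)
  then show ?thesis by (simp add: set_eq_iff in_transpose_image_iff)
qed

lemma fan_kempe_swap:
  assumes "fan A \<phi> v fs" "kempe_closed A \<phi> \<alpha> \<beta> C" "\<alpha> \<in> {1..k}" "\<beta> \<in> {1..k}"
    and "\<beta> \<in> missing A \<phi> v" "v \<notin> C"
    and "\<And>l. Suc l < length fs \<Longrightarrow> \<alpha> \<in> missing A \<phi> (snd (fs!l)) \<Longrightarrow> snd (fs!l) \<notin> C"
  shows "fan A (kempe_swap \<alpha> \<beta> C \<phi>) v fs"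
proof (rule fan_recolour[OF assms(1)])
  have at_v: "v \<in> ends (fst (fs!i))" if "i < length fs" for i
    using fan_nth(2)[OF assms(1) that] by simp
  then show "kempe_swap \<alpha> \<beta> C \<phi> (fst (fs!i)) = \<phi> (fst (fs!i))" if "i < length fs" for i
    using kempe_swap_outside assms(6) that by blast
  fix i l
  assume l: "l < i" "i < length fs" and "fst (fs!i) \<in> A"
    and c: "\<phi> (fst (fs!i)) \<in> missing A \<phi> (snd (fs!l))"
  then have not_\<beta>: "\<phi> (fst (fs!i)) \<noteq> \<beta>" using assms(5) at_v by (auto simp: missing_def)
  show "\<phi> (fst (fs!i)) \<in> missing A (kempe_swap \<alpha> \<beta> C \<phi>) (snd (fs!l))"
  proof (cases "snd (fs!l) \<in> C")
    case True
    then have "\<phi> (fst (fs!i)) \<noteq> \<alpha>" using assms(7)[of l] l c by auto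
    then show ?thesis
      using c not_\<beta> missing_kempe_swap_inside[OF assms(2) True assms(3,4)] by (metis image_eqI transpose_apply_other)
  qed (use c missing_kempe_swap_outside in auto)
qed

lemma fan_kempe_swap_extendable:
  assumes "A \<subseteq> E" "proper A \<phi>" "fan A \<phi> v fs" "\<beta> \<in> missing A \<phi> v"
    and q: "q < length fs" "\<alpha> \<in> missing A \<phi> (snd (fs!q))" "\<alpha> \<noteq> \<beta>"
    and avoid: "v \<notin> component (kempe_edges A \<phi> \<alpha> \<beta>) (snd (fs!q))"
      "\<And>l. l < q \<Longrightarrow> \<alpha> \<in> missing A \<phi> (snd (fs!l)) \<Longrightarrow>
         snd (fs!l) \<notin> component (kempe_edges A \<phi> \<alpha> \<beta>) (snd (fs!q))"
  shows "extendable A"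
proof -
  let ?C = "component (kempe_edges A \<phi> \<alpha> \<beta>) (snd (fs!q))"
  let ?\<psi> = "kempe_swap \<alpha> \<beta> ?C \<phi>"
  have colours: "\<alpha> \<in> {1..k}" "\<beta> \<in> {1..k}" using assms(4) q(2) by (auto simp: missing_def)
  have closed: "kempe_closed A \<phi> \<alpha> \<beta> ?C" by (rule kempe_closed_component[OF assms(1)])
  have "fan A ?\<psi> v (take (Suc q) fs)"
    using avoid(2) q(1) by (intro fan_kempe_swap[OF fan_take[OF assms(3)] closed colours assms(4) avoid(1)]) auto
  moreover have "\<beta> \<in> missing A ?\<psi> v" using missing_kempe_swap_outside[OF avoid(1)] assms(4) by simp
  moreover have "\<beta> \<in> missing A ?\<psi> (snd (fs!q))"
    using missing_kempe_swap_inside[OF closed component_refl colours] q(2) by force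
  moreover have "take (Suc q) fs \<noteq> []" "last (take (Suc q) fs) = fs!q"
    using q(1) by (simp_all add: take_Suc_conv_app_nth)
  ultimately show ?thesis
    using fan_shift_extendable[OF proper_kempe_swap[OF assms(2) closed colours]] by simp
qed

text \<open>Let j be the first fan vertex missing \<alpha>. Swap \<alpha> and \<beta> on the Kempe component of y_j,
  or, if that component contains v, on the one of y_p, which then avoids both v and y_j.\<close>

lemma fan_kempe_extendable:
  assumes "A \<subseteq> E" "proper A \<phi>" "fan A \<phi> v fs" "\<beta> \<in> missing A \<phi> v"
    and jp: "j < p" "p < length fs" "snd (fs!j) \<noteq> snd (fs!p)"
    and \<alpha>: "\<alpha> \<in> missing A \<phi> (snd (fs!j))" "\<alpha> \<in> missing A \<phi> (snd (fs!p))" "\<alpha> \<notin> missing A \<phi> v"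
    and first: "\<And>l. l < j \<Longrightarrow> \<alpha> \<notin> missing A \<phi> (snd (fs!l))"
    and unique: "\<And>l. l < p \<Longrightarrow> \<alpha> \<in> missing A \<phi> (snd (fs!l)) \<Longrightarrow> snd (fs!l) = snd (fs!j)"
  shows "extendable A"
proof -
  let ?H = "kempe_edges A \<phi> \<alpha> \<beta>"
  have "\<alpha> \<noteq> \<beta>" using assms(4) \<alpha>(3) by blast
  note swap = fan_kempe_swap_extendable[OF assms(1-4) _ _ \<open>\<alpha> \<noteq> \<beta>\<close>]
  show ?thesis
  proof (cases "v \<in> component ?H (snd (fs!j))")
    case False
    then show ?thesis using swap[of j] jp \<alpha>(1) first by auto
  next
    case True
    have distinct: "v \<noteq> snd (fs!j)" "v \<noteq> snd (fs!p)"
      using fan_nth(3)[OF assms(3)] jp by (metis order.strict_trans)+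
    have yj: "snd (fs!j) \<in> component ?H v" using component_sym[OF True] .
    have "snd (fs!p) \<notin> component ?H v"
      using kempe_component_no_three_ends[OF assms(1,2) \<open>\<alpha> \<noteq> \<beta>\<close> distinct jp(3) assms(4) \<alpha>(1,2) yj] by blast
    then have "v \<notin> component ?H (snd (fs!p))" "snd (fs!j) \<notin> component ?H (snd (fs!p))"
      using component_sym component_trans[OF _ yj] by blast+
    then show ?thesis using swap[OF jp(2) \<alpha>(2)] unique by metis
  qed
qed

lemma fan_elementary_step:
  assumes "A \<subseteq> E" "proper A \<phi>" "\<beta> \<in> missing A \<phi> v" "\<not> extendable A" "fan A \<phi> v fs"
    and p: "p < length fs"
    and prefix: "disjoint_family_on (missing A \<phi>) (insert v (snd ` set (take p fs)))"
    and x: "x \<in> insert v (snd ` set (take p fs))" "x \<noteq> snd (fs!p)"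
  shows "missing A \<phi> x \<inter> missing A \<phi> (snd (fs!p)) = {}"
proof (rule ccontr)
  assume "missing A \<phi> x \<inter> missing A \<phi> (snd (fs!p)) \<noteq> {}"
  then obtain \<alpha> where \<alpha>: "\<alpha> \<in> missing A \<phi> x" "\<alpha> \<in> missing A \<phi> (snd (fs!p))" by blast
  have "extendable A"
  proof (cases "x = v")
    case True
    have ne: "take (Suc p) fs \<noteq> []" and "last (take (Suc p) fs) = fs!p"
      using p by (simp_all add: take_Suc_conv_app_nth)
    then show ?thesis using fan_shift_extendable[OF assms(2) fan_take[OF assms(5)] ne] \<alpha> True by simp
  next
    case False
    then obtain j where j: "j < p" "x = snd (fs!j)" using x(1) p by (auto simp: in_set_conv_nth)
    obtain j\<^sub>0 where j\<^sub>0: "j\<^sub>0 \<le> j" "\<alpha> \<in> missing A \<phi> (snd (fs!j\<^sub>0))"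
      and first: "\<And>l. l < j\<^sub>0 \<Longrightarrow> \<alpha> \<notin> missing A \<phi> (snd (fs!l))"
      using ex_least_nat_le[of "\<lambda>l. \<alpha> \<in> missing A \<phi> (snd (fs!l))" j] \<alpha>(1) j(2) by blast
    have in_prefix: "snd (fs!l) \<in> insert v (snd ` set (take p fs))" if "l < p" for l
      using that p by (auto simp: in_set_conv_nth intro!: image_eqI[of _ snd "fs!l"] exI[of _ l])
    have unique: "snd (fs!l) = x" if "l < p" "\<alpha> \<in> missing A \<phi> (snd (fs!l))" for l
      using disjoint_family_onD[OF prefix in_prefix[OF that(1)] x(1)] that(2) \<alpha>(1) by blast
    have "\<alpha> \<notin> missing A \<phi> v" using disjoint_family_onD[OF prefix _ x(1)] False \<alpha>(1) by blast
    moreover have "snd (fs!j\<^sub>0) = x" using unique j\<^sub>0 j by simp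
    ultimately show ?thesis
      using j j\<^sub>0(1) x(2) unique
      by (intro fan_kempe_extendable[OF assms(1,2,5,3) _ p _ j\<^sub>0(2) \<alpha>(2) _ first]) auto
  qed
  with assms(4) show False ..
qed

text \<open>Vizing's fan lemma: by induction on the length of the fan, a colour missing at the new
  vertex and at v allows a shift, and one missing at an earlier vertex a Kempe swap.\<close>

lemma fan_elementary:
  assumes "A \<subseteq> E" "proper A \<phi>" "\<beta> \<in> missing A \<phi> v" "\<not> extendable A" "fan A \<phi> v fs"
  shows "disjoint_family_on (missing A \<phi>) (insert v (snd ` set fs))"
proof -
  have "disjoint_family_on (missing A \<phi>) (insert v (snd ` set (take p fs)))" for p
  proof (induction p)
    case 0
    then show ?case by (simp add: disjoint_family_on_def)
  next
    case (Suc p)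
    show ?case
    proof (cases "p < length fs")
      case False
      then show ?thesis using Suc.IH by simp
    next
      case True
      then have "set (take (Suc p) fs) = insert (fs!p) (set (take p fs))" by (simp add: take_Suc_conv_app_nth)
      then show ?thesis
        using Suc.IH fan_elementary_step[OF assms True Suc.IH] unfolding disjoint_family_on_def
        by (auto simp: Int_commute)
    qed
  qed
  from this[of "length fs"] show ?thesis by simp
qed

lemma uncoloured_fan_exists:
  obtains fs where "fan A \<phi> v fs" "\<And>e w. e \<in> E - A \<Longrightarrow> ends e = {v, w} \<Longrightarrow> w \<in> snd ` set fs"
proof -
  define P where "P = {ew \<in> (E - A) \<times> V. ends (fst ew) = {v, snd ew} \<and> snd ew \<noteq> v}"
  have "P \<subseteq> E \<times> V" by (auto simp: P_def)
  then have "finite P" by (rule finite_subset) (simp add: finite_E finite_V)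
  then obtain fs where fs: "set fs = P" "distinct fs" using finite_distinct_list by metis
  have "inj_on fst P" by (rule inj_onI) (auto simp: P_def doubleton_eq_iff prod_eq_iff)
  then have "distinct (map fst fs)" using fs by (simp add: distinct_map)
  moreover have "fs!i \<in> P" if "i < length fs" for i using fs(1) that nth_mem by metis
  ultimately have "fan A \<phi> v fs" unfolding fan_def by (auto simp: P_def mem_Times_iff)
  moreover have "w \<in> snd ` set fs" if "e \<in> E - A" "ends e = {v, w}" for e w
  proof -
    have "w \<noteq> v" "w \<in> V" using card_ends[of e] ends_subset_V[of e] that by auto
    then have "(e, w) \<in> set fs" using that fs(1) by (simp add: P_def)
    then show ?thesis by (rule image_eqI[rotated]) simp
  qed
  ultimately show ?thesis using that by blast
qed

lemma fan_length_le:
  assumes "fan A \<phi> v fs"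
  shows "length fs \<le> card E"
proof -
  have "set (map fst fs) \<subseteq> E" using fan_nth(1)[OF assms] by (auto simp: in_set_conv_nth) (metis fst_conv)
  then have "card (set (map fst fs)) \<le> card E" by (rule card_mono[OF finite_E])
  moreover have "distinct (map fst fs)" using assms by (simp add: fan_def)
  ultimately show ?thesis using distinct_card by fastforce
qed

text \<open>A longest fan containing fs_0 works: an edge violating the last property could be appended.\<close>

lemma closed_fan_exists:
  assumes "A \<subseteq> E" "fan A \<phi> v fs\<^sub>0"
  obtains fs where "fan A \<phi> v fs" "snd ` set fs\<^sub>0 \<subseteq> snd ` set fs"
    "\<And>e y. e \<in> A \<Longrightarrow> v \<in> ends e \<Longrightarrow> y \<in> snd ` set fs \<Longrightarrow> \<phi> e \<in> missing A \<phi> y \<Longrightarrow> e \<in> fst ` set fs"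
proof -
  let ?Q = "\<lambda>fs. fan A \<phi> v fs \<and> snd ` set fs\<^sub>0 \<subseteq> snd ` set fs"
  have "\<exists>fs. ?Q fs \<and> (\<forall>gs. ?Q gs \<longrightarrow> length gs \<le> length fs)"
    using assms(2) fan_length_le
    by (intro ex_has_greatest_nat[of ?Q fs\<^sub>0 length "Suc (card E)"]) (auto simp: less_Suc_eq_le)
  then obtain fs where fs: "?Q fs" and longest: "\<And>gs. ?Q gs \<Longrightarrow> length gs \<le> length fs"
    by blast
  moreover have "e \<in> fst ` set fs"
    if e: "e \<in> A" "v \<in> ends e" "y \<in> snd ` set fs" "\<phi> e \<in> missing A \<phi> y" for e y
  proof (rule ccontr)
    assume new: "e \<notin> fst ` set fs"
    obtain w where w: "w \<noteq> v" "ends e = {v, w}" using ends_eq_doubleton assms(1) e(1,2) by blast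
    obtain l where "l < length fs" "y = snd (fs!l)" using e(3) by (auto simp: in_set_conv_nth)
    then have "fan A \<phi> v (fs @ [(e, w)])"
      using fs new w assms(1) e(1,4) by (auto simp: fan_snoc_iff)
    then have "?Q (fs @ [(e, w)])" using fs by auto
    then show False using longest by fastforce
  qed
  ultimately show ?thesis using that by blast
qed

lemma card_edges_coloured_missing:
  assumes "proper A \<phi>" "finite Y" "v \<notin> Y" "disjoint_family_on (missing A \<phi>) (insert v Y)"
  shows "card {e\<in>A. v \<in> ends e \<and> \<phi> e \<in> (\<Union>y\<in>Y. missing A \<phi> y)} = (\<Sum>y\<in>Y. card (missing A \<phi> y))"
proof -
  define D where "D = {e\<in>A. v \<in> ends e \<and> \<phi> e \<in> (\<Union>y\<in>Y. missing A \<phi> y)}"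
  have "\<phi> ` D = (\<Union>y\<in>Y. missing A \<phi> y)"
  proof (intro subset_antisym subsetI)
    fix c assume "c \<in> (\<Union>y\<in>Y. missing A \<phi> y)"
    then obtain y where y: "y \<in> Y" "c \<in> missing A \<phi> y" by blast
    then have "c \<notin> missing A \<phi> v" using disjoint_family_onD[OF assms(4), of y v] assms(3) by auto
    then obtain e where "e \<in> A" "v \<in> ends e" "\<phi> e = c" using y(2) by (auto simp: missing_def)
    then show "c \<in> \<phi> ` D" using y by (auto simp: D_def)
  qed (auto simp: D_def)
  moreover have "inj_on \<phi> D"
    using proper_adjacent_distinct[OF assms(1)] by (auto intro!: inj_onI simp: D_def)
  ultimately have "card D = card (\<Union>y\<in>Y. missing A \<phi> y)" by (metis card_image)
  also have "\<dots> = (\<Sum>y\<in>Y. card (missing A \<phi> y))"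
    using assms(2) by (intro card_UN_disjoint'[OF disjoint_family_on_mono[OF subset_insertI assms(4)]])
      (simp_all add: finite_missing)
  finally show ?thesis by (simp add: D_def)
qed

text \<open>The colours missing at the fan vertices are present at v on pairwise distinct edges,
  which by closedness lead back into the fan and hence avoid every vertex outside it.\<close>

lemma missing_sum_le_deg:
  assumes "A \<subseteq> E" "proper A \<phi>" "fan A \<phi> v fs"
    and elementary: "disjoint_family_on (missing A \<phi>) (insert v (snd ` set fs))"
    and closed: "\<And>e y. e \<in> A \<Longrightarrow> v \<in> ends e \<Longrightarrow> y \<in> snd ` set fs \<Longrightarrow> \<phi> e \<in> missing A \<phi> y \<Longrightarrow> e \<in> fst ` set fs"
    and W: "finite W" "v \<notin> W" "W \<inter> snd ` set fs = {}"
  shows "(\<Sum>y\<in>snd ` set fs. card (missing A \<phi> y)) + (\<Sum>w\<in>W. mult A ends v w) \<le> deg A ends v"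
proof -
  define Y where "Y = snd ` set fs"
  define D\<^sub>1 where "D\<^sub>1 = {e\<in>A. v \<in> ends e \<and> \<phi> e \<in> (\<Union>y\<in>Y. missing A \<phi> y)}"
  define D\<^sub>2 where "D\<^sub>2 = (\<Union>w\<in>W. {e\<in>A. ends e = {v, w}})"
  have "finite A" using assms(1) finite_E by (rule finite_subset)
  have Y: "finite Y" "v \<notin> Y" using fan_memD(3)[OF assms(3)] by (auto simp: Y_def) blast
  have card_D\<^sub>1: "card D\<^sub>1 = (\<Sum>y\<in>Y. card (missing A \<phi> y))"
    unfolding D\<^sub>1_def using card_edges_coloured_missing[OF assms(2) Y] elementary by (simp add: Y_def)
  have card_D\<^sub>2: "card D\<^sub>2 = (\<Sum>w\<in>W. mult A ends v w)"
    unfolding D\<^sub>2_def mult_def using W(1,2) \<open>finite A\<close>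
    by (intro card_UN_disjoint) (auto simp: doubleton_eq_iff)
  have "D\<^sub>1 \<inter> D\<^sub>2 = {}"
  proof (rule ccontr)
    assume "D\<^sub>1 \<inter> D\<^sub>2 \<noteq> {}"
    then obtain e w y where e: "e \<in> A" "w \<in> W" "ends e = {v, w}" "y \<in> Y" "\<phi> e \<in> missing A \<phi> y"
      by (auto simp: D\<^sub>1_def D\<^sub>2_def)
    then obtain y' where "(e, y') \<in> set fs" using closed[of e y] by (auto simp: Y_def)
    then have "ends e = {v, y'}" "y' \<in> Y" by (auto simp: fan_memD(2)[OF assms(3)] Y_def rev_image_eqI)
    then show False using e(2,3) W(2,3) by (auto simp: doubleton_eq_iff Y_def)
  qed
  moreover have "finite D\<^sub>1" "finite D\<^sub>2"
    using \<open>finite A\<close> by (auto simp: D\<^sub>1_def D\<^sub>2_def intro: finite_subset[of _ A])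
  ultimately have "card D\<^sub>1 + card D\<^sub>2 = card (D\<^sub>1 \<union> D\<^sub>2)" by (simp add: card_Un_disjoint)
  also have "\<dots> \<le> deg A ends v"
    unfolding deg_def using \<open>finite A\<close> by (intro card_mono) (auto simp: D\<^sub>1_def D\<^sub>2_def)
  finally show ?thesis using card_D\<^sub>1 card_D\<^sub>2 by (simp add: Y_def)
qed

lemma Uk_uncoloured_edge:
  assumes "M \<subseteq> E" "w \<in> Uk V E ends M k v"
  shows "\<exists>e\<in>E - M. ends e = {v, w}"
proof (rule ccontr)
  assume "\<not> ?thesis"
  then have "{e\<in>E. ends e = {v, w}} \<subseteq> {e\<in>M. ends e = {v, w}}" by blast
  then have "mult E ends v w \<le> mult M ends v w"
    unfolding mult_def using finite_subset[OF assms(1) finite_E] by (intro card_mono) auto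
  then show False using assms(2) by (simp add: Uk_def)
qed

lemma dF_le_of_closed_fan:
  assumes "M \<subseteq> E" "proper M \<phi>" "fan M \<phi> v fs"
    and "disjoint_family_on (missing M \<phi>) (insert v (snd ` set fs))"
    and "\<And>e y. e \<in> M \<Longrightarrow> v \<in> ends e \<Longrightarrow> y \<in> snd ` set fs \<Longrightarrow> \<phi> e \<in> missing M \<phi> y \<Longrightarrow> e \<in> fst ` set fs"
    and U_fan: "Uk V E ends M k v \<subseteq> snd ` set fs"
  shows "int (dF V E ends M k v) \<le> int (deg M ends v) -
           (\<Sum>w\<in>Uk V E ends M k v. int k - int (deg M ends w) - int (mult E ends v w))"
proof -
  let ?F = "Fk V E ends M k v" and ?U = "Uk V E ends M k v" and ?Y = "snd ` set fs"
  let ?miss = "\<lambda>w. card (missing M \<phi> w)"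
  have "finite M" using assms(1) finite_E by (rule finite_subset)
  have miss: "int (?miss w) = int k - int (deg M ends w)" for w
    using card_missing[OF assms(2) \<open>finite M\<close>] deg_le_k[OF assms(2) \<open>finite M\<close>] by (simp add: of_nat_diff)
  have F: "finite ?F" "?U \<subseteq> ?F" "v \<notin> ?F"
    using finite_subset[OF _ finite_V] by (auto simp: Fk_def Uk_def nbrs_def)
  have "(if w \<in> ?U then ?miss w else mult E ends v w) \<le> (if w \<in> ?Y then ?miss w else mult M ends v w)"
    if "w \<in> ?F" for w
  proof -
    have "mult E ends v w \<le> ?miss w" using that miss[of w] by (simp add: Fk_def)
    moreover have "w \<notin> ?U \<Longrightarrow> mult E ends v w \<le> mult M ends v w" using that by (simp add: Uk_def)
    ultimately show ?thesis using U_fan by auto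
  qed
  then have "(\<Sum>w\<in>?F. if w \<in> ?U then ?miss w else mult E ends v w)
      \<le> (\<Sum>w\<in>?F. if w \<in> ?Y then ?miss w else mult M ends v w)"
    by (rule sum_mono)
  also have "\<dots> = (\<Sum>w\<in>?F \<inter> ?Y. ?miss w) + (\<Sum>w\<in>?F - ?Y. mult M ends v w)"
    using F(1) by (simp add: sum.If_cases Diff_eq)
  also have "\<dots> \<le> (\<Sum>w\<in>?Y. ?miss w) + (\<Sum>w\<in>?F - ?Y. mult M ends v w)"
    by (simp add: sum_mono2)
  also have "\<dots> \<le> deg M ends v"
    using F(1,3) by (intro missing_sum_le_deg[OF assms(1-5)]) auto
  finally have "(\<Sum>w\<in>?U. ?miss w) + (\<Sum>w\<in>?F - ?U. mult E ends v w) \<le> deg M ends v"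
    using F(1,2) by (simp add: sum.If_cases Diff_eq Int_absorb1)
  moreover have "dF V E ends M k v = (\<Sum>w\<in>?U. mult E ends v w) + (\<Sum>w\<in>?F - ?U. mult E ends v w)"
    unfolding dF_def using sum.subset_diff[OF F(2,1), of "mult E ends v"] by (simp add: add.commute)
  moreover have "(\<Sum>w\<in>?U. int k - int (deg M ends w) - int (mult E ends v w))
      = int (\<Sum>w\<in>?U. ?miss w) - int (\<Sum>w\<in>?U. mult E ends v w)"
    by (simp add: miss sum_subtractf)
  ultimately show ?thesis by linarith
qed

end

theorem mainTheorem3:
  fixes V :: "'v set" and E :: "'e set" and ends :: "'e \<Rightarrow> 'v set"
    and M :: "'e set" and k :: nat and v :: 'v
  assumes "loopless_multigraph V E ends"
    and "k \<ge> 1"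
    and "maximal_k_colorable E ends k M"
    and "v \<in> V"
    and "deg M ends v < k"
  shows "int (dF V E ends M k v) \<le> int (deg M ends v) -
           (\<Sum>w\<in>Uk V E ends M k v. int k - int (deg M ends w) - int (mult E ends v w))"
proof -
  interpret multigraph_k_colouring V E ends k by standard (fact assms(1))
  have M: "M \<subseteq> E" "\<not> extendable M"
    using assms(3) maximal_not_extendable by (auto simp: maximal_k_colorable_def)
  obtain \<phi> where \<phi>: "proper M \<phi>"
    using assms(3) by (auto simp: maximal_k_colorable_def k_edge_colorable_def)
  have "card (missing M \<phi> v) > 0"
    using card_missing[OF \<phi> finite_subset[OF M(1) finite_E]] assms(5) by simp
  then obtain \<beta> where \<beta>: "\<beta> \<in> missing M \<phi> v" by (metis card.empty ex_in_conv less_irrefl)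
  obtain fs\<^sub>0 where fs\<^sub>0: "fan M \<phi> v fs\<^sub>0" "\<And>e w. e \<in> E - M \<Longrightarrow> ends e = {v, w} \<Longrightarrow> w \<in> snd ` set fs\<^sub>0"
    using uncoloured_fan_exists[of M \<phi> v] by blast
  obtain fs where fan: "fan M \<phi> v fs" and covers: "snd ` set fs\<^sub>0 \<subseteq> snd ` set fs"
    and closed: "\<And>e y. e \<in> M \<Longrightarrow> v \<in> ends e \<Longrightarrow> y \<in> snd ` set fs \<Longrightarrow> \<phi> e \<in> missing M \<phi> y \<Longrightarrow> e \<in> fst ` set fs"
    using closed_fan_exists[OF M(1) fs\<^sub>0(1)] by blast
  have "Uk V E ends M k v \<subseteq> snd ` set fs"
  proof
    fix w assume "w \<in> Uk V E ends M k v"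
    then obtain e where "e \<in> E - M" "ends e = {v, w}" using Uk_uncoloured_edge[OF M(1)] by blast
    then show "w \<in> snd ` set fs" using fs\<^sub>0(2) covers by blast
  qed
  then show ?thesis
    using closed by (intro dF_le_of_closed_fan[OF M(1) \<phi> fan fan_elementary[OF M(1) \<phi> \<beta> M(2) fan]])
qed

end
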